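(* Assume (A1), (A2), (A3), and that for each class $c\in[C]$ the revision protocol $\rho^c$ is an excess payoff or a pairwise comparison protocol. If $\mu\in X$ is a rest point of the master equation, i.e., $f^{c,d}_{s,u}(\mu)+f^{c,r}_{s,u}(\mu)=0$ for all $c\in[C]$, $s\in\mathcal S^c$, $u\in\mathcal U^c_D$, then $\mu$ is a mixed stationary Nash equilibrium.
   Context: Model: classes $c\in[C]$ with masses $m^c>0$, finite state sets $\mathcal S^c$, nonempty finite admissible action sets $\mathcal A^c(s)$ ($\mathcal A^c=\bigcup_s\mathcal A^c(s)$), transition kernels $\phi^c(\cdot\mid s,a)\in\mathcal P(\mathcal S^c)$, action rates $\lambda^c>0$; $p=\sum_c|\mathcal S^c|,q=\sum_c|\mathcal A^c|$. $\mathcal U^c_D$ = deterministic policies ($s\mapsto u(s)\in\mathcal A^c(s)$; $u(a\mid s)=\mathbf 1[a=u(s)]$), $n^c=|\mathcal U^c_D|$. $\phi^{c,u}_{ss'}=\phi^c(s\mid s',u(s'))$. (A2): for all $c,u\in\mathcal U^c_D$, $\phi^{c,u}$ has exactly one recurrent communicating class; $\eta^{c,u}$ is the unique stationary distribution of the continuous-time chain with generator $\lambda^c(\phi^{c,u}-I)$. $X=\prod_c\{\mu^c\in\mathbb R_{\ge0}^{\mathcal S^c\times\mathcal U^c_D}:\sum\mu^c=m^c\}$, $X_{\mathcal S\times\mathcal A}=\prod_c\{\nu\in\mathbb R_{\ge0}^{\mathcal S^c\times\mathcal A^c}:\sum\nu=m^c\}$, $X^c_{\mathcal U_D}=\{\sigma\in\mathbb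 R^{n^c}_{\ge0}:\sum\sigma=m^c\}$; $\mu^c_{\mathcal S\times\mathcal A}[s,a]=\sum_u\mu^c[s,u]u(a\mid s)$; $\mu^c[\mathcal S^c,u]=\sum_s\mu^c[s,u]$, $\mu^c[\mathcal S^c,\cdot]=(\mu^c[\mathcal S^c,u])_u$. Rewards $r^c:\mathcal S^c\times\mathcal A^c\times X_{\mathcal S\times\mathcal A}\to\mathbb R$; (A1): each $r^c(s,a,\cdot)$ extends to $\mathbb R^{pq}_{\ge0}$ with an extension continuously differentiable on $X_{\mathcal S\times\mathcal A}$. $F^c_u(\mu)=\sum_{s}\sum_{a\in\mathcal A^c(s)}\eta^{c,u}(s)u(a\mid s)r^c(s,a,\mu_{\mathcal S\times\mathcal A})$, $F^c(\mu)=(F^c_u(\mu))_u$. MSNE: $\mu\in X$ with, for all $c,u$: (i) $\mu^c[\mathcal S^c,u]>0\Rightarrow F^c_u(\mu)\ge F^c_v(\mu)\ \forall v\in\mathcal U^c_D$; (ii) $\mu^c[s,u]=\eta^{c,u}(s)\mu^c[\mathcal S^c,u]$ for all $s$. Revision protocol of class $c$: $\rho^c:\mathbb R^{n^c}\times X^c_{\mathcal U_D}\to\mathbb R^{n^c\times n^c}_{\ge0}$ with revision rate $R^c>0$; (A3): $\rho^c$ Lipschitz and $R^c\ge\sup_{\mu\in X}\sum_{v\ne u}\rho^c_{uv}(F^c(\mu),\mu^c[\mathcal S^c,\cdot])$ for all $u$. Excess payoff: $\rho^c_{uv}(F,\sigma)=\tau^c_v(\hat F)$ with $\hat F=F-\mathbf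 1F^\top\sigma/m^c$ and $\tau^c:\mathbb R^{n^c}\to\mathbb R^{n^c}_{\ge0}$ Lipschitz with $\hat F\notin\mathbb R^{n^c}_{\le0}\Rightarrow\tau^c(\hat F)^\top\hat F>0$; pairwise comparison: $\rho^c_{uv}(F,\sigma)=\tau^c_{uv}(F)$ with $\tau^c$ Lipschitz, nonnegative and $\mathrm{sign}(\tau^c_{uv}(F))=\mathrm{sign}(\max(0,F_v-F_u))$. Master equation vector fields: $f^{c,d}_{s,u}(\mu)=\lambda^c\sum_{s'}\sum_{a'\in\mathcal A^c(s')}\phi^c(s\mid s',a')u(a'\mid s')\mu^c[s',u]-\lambda^c\mu^c[s,u]$; $f^{c,r}_{s,u}(\mu)=\sum_{u'}\mu^c[s,u']\rho^c_{u'u}(F^c(\mu),\mu^c[\mathcal S^c,\cdot])-\mu^c[s,u]\sum_{u'}\rho^c_{uu'}(F^c(\mu),\mu^c[\mathcal S^c,\cdot])$. *)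

theory Defs
  imports "HOL-Analysis.Analysis" "HOL-Library.FuncSet"
begin

(* Classes are the elements of a finite type 'c, states live in a finite type 's,
   actions in a finite type 'a.  Class c has state set S c, admissible actions A c s. *)

definition pol :: "('s \<Rightarrow> 'a) \<Rightarrow> 's \<Rightarrow> 'a \<Rightarrow> real" where
  "pol u s a = (if a = u s then 1 else 0)"

definition Pols :: "('c \<Rightarrow> 's set) \<Rightarrow> ('c \<Rightarrow> 's \<Rightarrow> 'a set) \<Rightarrow> 'c \<Rightarrow> ('s \<Rightarrow> 'a) set" where
  "Pols S A c = Pi\<^sub>E (S c) (A c)"

definition Aall :: "('c \<Rightarrow> 's set) \<Rightarrow> ('c \<Rightarrow> 's \<Rightarrow> 'a set) \<Rightarrow> 'c \<Rightarrow> 'a set" where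
  "Aall S A c = (\<Union>s\<in>S c. A c s)"

(* phi c s s' a = phi^c(s | s', a) *)
definition step_rel :: "('c \<Rightarrow> 's set) \<Rightarrow> ('c \<Rightarrow> 's \<Rightarrow> 's \<Rightarrow> 'a \<Rightarrow> real) \<Rightarrow> 'c \<Rightarrow> ('s \<Rightarrow> 'a) \<Rightarrow> ('s \<times> 's) set" where
  "step_rel S phi c u = {(s, t). s \<in> S c \<and> t \<in> S c \<and> phi c t s (u s) > 0}"

definition recurrent_state :: "('c \<Rightarrow> 's set) \<Rightarrow> ('c \<Rightarrow> 's \<Rightarrow> 's \<Rightarrow> 'a \<Rightarrow> real) \<Rightarrow> 'c \<Rightarrow> ('s \<Rightarrow> 'a) \<Rightarrow> 's \<Rightarrow> bool" where
  "recurrent_state S phi c u s \<longleftrightarrow> s \<in> S c \<and>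
     (\<forall>t. (s, t) \<in> (step_rel S phi c u)\<^sup>* \<longrightarrow> (t, s) \<in> (step_rel S phi c u)\<^sup>*)"

definition unique_recurrent_class :: "('c \<Rightarrow> 's set) \<Rightarrow> ('c \<Rightarrow> 's \<Rightarrow> 's \<Rightarrow> 'a \<Rightarrow> real) \<Rightarrow> 'c \<Rightarrow> ('s \<Rightarrow> 'a) \<Rightarrow> bool" where
  "unique_recurrent_class S phi c u \<longleftrightarrow>
     (\<exists>s. recurrent_state S phi c u s) \<and>
     (\<forall>s t. recurrent_state S phi c u s \<and> recurrent_state S phi c u t
            \<longrightarrow> (s, t) \<in> (step_rel S phi c u)\<^sup>*)"

(* stationary distribution of the CTMC with generator lam c (phi^{c,u} - I) *)
definition stat_dist :: "('c \<Rightarrow> 's set) \<Rightarrow> ('c \<Rightarrow> 's \<Rightarrow> 's \<Rightarrow> 'a \<Rightarrow> real) \<Rightarrow> ('c \<Rightarrow> real) \<Rightarrow> 'c \<Rightarrow> ('s \<Rightarrow> 'a) \<Rightarrow> ('s \<Rightarrow> real) \<Rightarrow> bool" where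
  "stat_dist S phi lam c u \<eta> \<longleftrightarrow>
     (\<forall>s. s \<notin> S c \<longrightarrow> \<eta> s = 0) \<and> (\<forall>s\<in>S c. \<eta> s \<ge> 0) \<and> sum \<eta> (S c) = 1 \<and>
     (\<forall>s\<in>S c. lam c * ((\<Sum>s'\<in>S c. phi c s s' (u s') * \<eta> s') - \<eta> s) = 0)"

definition eta :: "('c \<Rightarrow> 's set) \<Rightarrow> ('c \<Rightarrow> 's \<Rightarrow> 's \<Rightarrow> 'a \<Rightarrow> real) \<Rightarrow> ('c \<Rightarrow> real) \<Rightarrow> 'c \<Rightarrow> ('s \<Rightarrow> 'a) \<Rightarrow> 's \<Rightarrow> real" where
  "eta S phi lam c u = (THE \<eta>. stat_dist S phi lam c u \<eta>)"

(* population states mu c s u = mu^c[s,u] *)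
definition Xset :: "('c::finite \<Rightarrow> 's set) \<Rightarrow> ('c \<Rightarrow> 's \<Rightarrow> 'a set) \<Rightarrow> ('c \<Rightarrow> real) \<Rightarrow> ('c \<Rightarrow> 's \<Rightarrow> ('s \<Rightarrow> 'a) \<Rightarrow> real) set" where
  "Xset S A m = {mu. \<forall>c. (\<forall>s\<in>S c. \<forall>u\<in>Pols S A c. mu c s u \<ge> 0) \<and>
                        (\<Sum>s\<in>S c. \<Sum>u\<in>Pols S A c. mu c s u) = m c}"

(* coordinates of R^{pq} inside real^('c \<times> 's \<times> 'a) *)
definition Ipq :: "('c \<Rightarrow> 's set) \<Rightarrow> ('c \<Rightarrow> 's \<Rightarrow> 'a set) \<Rightarrow> ('c \<times> 's \<times> 'a) set" where
  "Ipq S A = {(c, s, a). s \<in> S c \<and> a \<in> Aall S A c}"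

definition Rpq_nonneg :: "('c::finite \<Rightarrow> 's::finite set) \<Rightarrow> ('c \<Rightarrow> 's \<Rightarrow> 'a::finite set) \<Rightarrow> (real ^ ('c \<times> 's \<times> 'a)) set" where
  "Rpq_nonneg S A = {x. \<forall>i. x $ i \<ge> 0 \<and> (i \<notin> Ipq S A \<longrightarrow> x $ i = 0)}"

definition XSA :: "('c::finite \<Rightarrow> 's::finite set) \<Rightarrow> ('c \<Rightarrow> 's \<Rightarrow> 'a::finite set) \<Rightarrow> ('c \<Rightarrow> real) \<Rightarrow> (real ^ ('c \<times> 's \<times> 'a)) set" where
  "XSA S A m = {x \<in> Rpq_nonneg S A. \<forall>c. (\<Sum>s\<in>S c. \<Sum>a\<in>Aall S A c. x $ (c, s, a)) = m c}"

definition muSA :: "('c::finite \<Rightarrow> 's::finite set) \<Rightarrow> ('c \<Rightarrow> 's \<Rightarrow> 'a::finite set) \<Rightarrow> ('c \<Rightarrow> 's \<Rightarrow> ('s \<Rightarrow> 'a) \<Rightarrow> real) \<Rightarrow> real ^ ('c \<times> 's \<times> 'a)" where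
  "muSA S A mu = (\<chi> i. case i of (c, s, a) \<Rightarrow> (if s \<in> S c \<and> a \<in> Aall S A c
                                 then (\<Sum>u\<in>Pols S A c. mu c s u * pol u s a) else 0))"

definition mass_pol :: "('c \<Rightarrow> 's set) \<Rightarrow> ('c \<Rightarrow> 's \<Rightarrow> ('s \<Rightarrow> 'a) \<Rightarrow> real) \<Rightarrow> 'c \<Rightarrow> ('s \<Rightarrow> 'a) \<Rightarrow> real" where
  "mass_pol S mu c u = (\<Sum>s\<in>S c. mu c s u)"

definition Fpay :: "('c::finite \<Rightarrow> 's::finite set) \<Rightarrow> ('c \<Rightarrow> 's \<Rightarrow> 'a::finite set) \<Rightarrow> ('c \<Rightarrow> 's \<Rightarrow> 's \<Rightarrow> 'a \<Rightarrow> real)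
     \<Rightarrow> ('c \<Rightarrow> real) \<Rightarrow> ('c \<Rightarrow> 's \<Rightarrow> 'a \<Rightarrow> real ^ ('c \<times> 's \<times> 'a) \<Rightarrow> real)
     \<Rightarrow> ('c \<Rightarrow> 's \<Rightarrow> ('s \<Rightarrow> 'a) \<Rightarrow> real) \<Rightarrow> 'c \<Rightarrow> ('s \<Rightarrow> 'a) \<Rightarrow> real" where
  "Fpay S A phi lam r mu c u =
     (\<Sum>s\<in>S c. \<Sum>a\<in>A c s. eta S phi lam c u s * pol u s a * r c s a (muSA S A mu))"

definition XU :: "('c \<Rightarrow> 's set) \<Rightarrow> ('c \<Rightarrow> 's \<Rightarrow> 'a set) \<Rightarrow> ('c \<Rightarrow> real) \<Rightarrow> 'c \<Rightarrow> (('s \<Rightarrow> 'a) \<Rightarrow> real) set" where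
  "XU S A m c = {\<sigma>. (\<forall>u\<in>Pols S A c. \<sigma> u \<ge> 0) \<and> sum \<sigma> (Pols S A c) = m c}"

definition A1 :: "('c::finite \<Rightarrow> 's::finite set) \<Rightarrow> ('c \<Rightarrow> 's \<Rightarrow> 'a::finite set) \<Rightarrow> ('c \<Rightarrow> real)
     \<Rightarrow> ('c \<Rightarrow> 's \<Rightarrow> 'a \<Rightarrow> real ^ ('c \<times> 's \<times> 'a) \<Rightarrow> real) \<Rightarrow> bool" where
  "A1 S A m r \<longleftrightarrow> (\<forall>c. \<forall>s\<in>S c. \<forall>a\<in>A c s.
     \<exists>g grad. (\<forall>x\<in>XSA S A m. g x = r c s a x) \<and>
       (\<forall>x\<in>XSA S A m. (g has_derivative (\<lambda>h. grad x \<bullet> h)) (at x within Rpq_nonneg S A)) \<and>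
       continuous_on (XSA S A m) grad)"

definition A2 :: "('c \<Rightarrow> 's set) \<Rightarrow> ('c \<Rightarrow> 's \<Rightarrow> 'a set) \<Rightarrow> ('c \<Rightarrow> 's \<Rightarrow> 's \<Rightarrow> 'a \<Rightarrow> real) \<Rightarrow> bool" where
  "A2 S A phi \<longleftrightarrow> (\<forall>c. \<forall>u\<in>Pols S A c. unique_recurrent_class S phi c u)"

(* revision protocols: rho c F sigma u v = rho^c_{uv}(F, sigma);
   vectors in R^{n^c} are functions on Pols S A c; Lipschitz w.r.t. the l1 norm *)
definition rho_lipschitz :: "('c \<Rightarrow> 's set) \<Rightarrow> ('c \<Rightarrow> 's \<Rightarrow> 'a set) \<Rightarrow> ('c \<Rightarrow> real)
     \<Rightarrow> ('c \<Rightarrow> (('s \<Rightarrow> 'a) \<Rightarrow> real) \<Rightarrow> (('s \<Rightarrow> 'a) \<Rightarrow> real) \<Rightarrow> ('s \<Rightarrow> 'a) \<Rightarrow> ('s \<Rightarrow> 'a) \<Rightarrow> real) \<Rightarrow> 'c \<Rightarrow> bool" where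
  "rho_lipschitz S A m rho c \<longleftrightarrow> (\<exists>L. \<forall>F F' \<sigma> \<sigma>'. \<sigma> \<in> XU S A m c \<longrightarrow> \<sigma>' \<in> XU S A m c \<longrightarrow>
     (\<forall>u\<in>Pols S A c. \<forall>v\<in>Pols S A c.
        \<bar>rho c F \<sigma> u v - rho c F' \<sigma>' u v\<bar>
          \<le> L * ((\<Sum>w\<in>Pols S A c. \<bar>F w - F' w\<bar>) + (\<Sum>w\<in>Pols S A c. \<bar>\<sigma> w - \<sigma>' w\<bar>))))"

definition rho_nonneg :: "('c \<Rightarrow> 's set) \<Rightarrow> ('c \<Rightarrow> 's \<Rightarrow> 'a set) \<Rightarrow> ('c \<Rightarrow> real)
     \<Rightarrow> ('c \<Rightarrow> (('s \<Rightarrow> 'a) \<Rightarrow> real) \<Rightarrow> (('s \<Rightarrow> 'a) \<Rightarrow> real) \<Rightarrow> ('s \<Rightarrow> 'a) \<Rightarrow> ('s \<Rightarrow> 'a) \<Rightarrow> real) \<Rightarrow> 'c \<Rightarrow> bool" where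
  "rho_nonneg S A m rho c \<longleftrightarrow> (\<forall>F \<sigma>. \<sigma> \<in> XU S A m c \<longrightarrow>
     (\<forall>u\<in>Pols S A c. \<forall>v\<in>Pols S A c. rho c F \<sigma> u v \<ge> 0))"

definition A3 :: "('c::finite \<Rightarrow> 's::finite set) \<Rightarrow> ('c \<Rightarrow> 's \<Rightarrow> 'a::finite set) \<Rightarrow> ('c \<Rightarrow> 's \<Rightarrow> 's \<Rightarrow> 'a \<Rightarrow> real)
     \<Rightarrow> ('c \<Rightarrow> real) \<Rightarrow> ('c \<Rightarrow> real) \<Rightarrow> ('c \<Rightarrow> 's \<Rightarrow> 'a \<Rightarrow> real ^ ('c \<times> 's \<times> 'a) \<Rightarrow> real)
     \<Rightarrow> ('c \<Rightarrow> (('s \<Rightarrow> 'a) \<Rightarrow> real) \<Rightarrow> (('s \<Rightarrow> 'a) \<Rightarrow> real) \<Rightarrow> ('s \<Rightarrow> 'a) \<Rightarrow> ('s \<Rightarrow> 'a) \<Rightarrow> real)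
     \<Rightarrow> ('c \<Rightarrow> real) \<Rightarrow> bool" where
  "A3 S A phi lam m r rho R \<longleftrightarrow> (\<forall>c. rho_lipschitz S A m rho c \<and>
     (\<forall>mu\<in>Xset S A m. \<forall>u\<in>Pols S A c.
        (\<Sum>v\<in>Pols S A c - {u}. rho c (Fpay S A phi lam r mu c) (mass_pol S mu c) u v) \<le> R c))"

definition excess_payoff_protocol :: "('c \<Rightarrow> 's set) \<Rightarrow> ('c \<Rightarrow> 's \<Rightarrow> 'a set) \<Rightarrow> ('c \<Rightarrow> real)
     \<Rightarrow> ('c \<Rightarrow> (('s \<Rightarrow> 'a) \<Rightarrow> real) \<Rightarrow> (('s \<Rightarrow> 'a) \<Rightarrow> real) \<Rightarrow> ('s \<Rightarrow> 'a) \<Rightarrow> ('s \<Rightarrow> 'a) \<Rightarrow> real) \<Rightarrow> 'c \<Rightarrow> bool" where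
  "excess_payoff_protocol S A m rho c \<longleftrightarrow> (\<exists>\<tau> :: (('s \<Rightarrow> 'a) \<Rightarrow> real) \<Rightarrow> ('s \<Rightarrow> 'a) \<Rightarrow> real.
     (\<forall>F \<sigma>. \<sigma> \<in> XU S A m c \<longrightarrow> (\<forall>u\<in>Pols S A c. \<forall>v\<in>Pols S A c.
        rho c F \<sigma> u v = \<tau> (\<lambda>w. F w - (\<Sum>w'\<in>Pols S A c. F w' * \<sigma> w') / m c) v)) \<and>
     (\<exists>L. \<forall>G G'. \<forall>v\<in>Pols S A c. \<bar>\<tau> G v - \<tau> G' v\<bar> \<le> L * (\<Sum>w\<in>Pols S A c. \<bar>G w - G' w\<bar>)) \<and>
     (\<forall>G. \<forall>v\<in>Pols S A c. \<tau> G v \<ge> 0) \<and>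
     (\<forall>G. (\<exists>v\<in>Pols S A c. G v > 0) \<longrightarrow> (\<Sum>v\<in>Pols S A c. \<tau> G v * G v) > 0))"

definition pairwise_comparison_protocol :: "('c \<Rightarrow> 's set) \<Rightarrow> ('c \<Rightarrow> 's \<Rightarrow> 'a set) \<Rightarrow> ('c \<Rightarrow> real)
     \<Rightarrow> ('c \<Rightarrow> (('s \<Rightarrow> 'a) \<Rightarrow> real) \<Rightarrow> (('s \<Rightarrow> 'a) \<Rightarrow> real) \<Rightarrow> ('s \<Rightarrow> 'a) \<Rightarrow> ('s \<Rightarrow> 'a) \<Rightarrow> real) \<Rightarrow> 'c \<Rightarrow> bool" where
  "pairwise_comparison_protocol S A m rho c \<longleftrightarrow> (\<exists>\<tau> :: (('s \<Rightarrow> 'a) \<Rightarrow> real) \<Rightarrow> ('s \<Rightarrow> 'a) \<Rightarrow> ('s \<Rightarrow> 'a) \<Rightarrow> real.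
     (\<forall>F \<sigma>. \<sigma> \<in> XU S A m c \<longrightarrow> (\<forall>u\<in>Pols S A c. \<forall>v\<in>Pols S A c. rho c F \<sigma> u v = \<tau> F u v)) \<and>
     (\<exists>L. \<forall>G G'. \<forall>u\<in>Pols S A c. \<forall>v\<in>Pols S A c.
         \<bar>\<tau> G u v - \<tau> G' u v\<bar> \<le> L * (\<Sum>w\<in>Pols S A c. \<bar>G w - G' w\<bar>)) \<and>
     (\<forall>G. \<forall>u\<in>Pols S A c. \<forall>v\<in>Pols S A c. \<tau> G u v \<ge> 0 \<and> sgn (\<tau> G u v) = sgn (max 0 (G v - G u))))"

definition fd :: "('c \<Rightarrow> 's set) \<Rightarrow> ('c \<Rightarrow> 's \<Rightarrow> 'a set) \<Rightarrow> ('c \<Rightarrow> 's \<Rightarrow> 's \<Rightarrow> 'a \<Rightarrow> real) \<Rightarrow> ('c \<Rightarrow> real)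
     \<Rightarrow> ('c \<Rightarrow> 's \<Rightarrow> ('s \<Rightarrow> 'a) \<Rightarrow> real) \<Rightarrow> 'c \<Rightarrow> 's \<Rightarrow> ('s \<Rightarrow> 'a) \<Rightarrow> real" where
  "fd S A phi lam mu c s u =
     lam c * (\<Sum>s'\<in>S c. \<Sum>a'\<in>A c s'. phi c s s' a' * pol u s' a' * mu c s' u) - lam c * mu c s u"

definition fr :: "('c::finite \<Rightarrow> 's::finite set) \<Rightarrow> ('c \<Rightarrow> 's \<Rightarrow> 'a::finite set) \<Rightarrow> ('c \<Rightarrow> 's \<Rightarrow> 's \<Rightarrow> 'a \<Rightarrow> real)
     \<Rightarrow> ('c \<Rightarrow> real) \<Rightarrow> ('c \<Rightarrow> 's \<Rightarrow> 'a \<Rightarrow> real ^ ('c \<times> 's \<times> 'a) \<Rightarrow> real)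
     \<Rightarrow> ('c \<Rightarrow> (('s \<Rightarrow> 'a) \<Rightarrow> real) \<Rightarrow> (('s \<Rightarrow> 'a) \<Rightarrow> real) \<Rightarrow> ('s \<Rightarrow> 'a) \<Rightarrow> ('s \<Rightarrow> 'a) \<Rightarrow> real)
     \<Rightarrow> ('c \<Rightarrow> 's \<Rightarrow> ('s \<Rightarrow> 'a) \<Rightarrow> real) \<Rightarrow> 'c \<Rightarrow> 's \<Rightarrow> ('s \<Rightarrow> 'a) \<Rightarrow> real" where
  "fr S A phi lam r rho mu c s u =
     (\<Sum>u'\<in>Pols S A c. mu c s u' * rho c (Fpay S A phi lam r mu c) (mass_pol S mu c) u' u)
     - mu c s u * (\<Sum>u'\<in>Pols S A c. rho c (Fpay S A phi lam r mu c) (mass_pol S mu c) u u')"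

definition MSNE :: "('c::finite \<Rightarrow> 's::finite set) \<Rightarrow> ('c \<Rightarrow> 's \<Rightarrow> 'a::finite set) \<Rightarrow> ('c \<Rightarrow> 's \<Rightarrow> 's \<Rightarrow> 'a \<Rightarrow> real)
     \<Rightarrow> ('c \<Rightarrow> real) \<Rightarrow> ('c \<Rightarrow> real) \<Rightarrow> ('c \<Rightarrow> 's \<Rightarrow> 'a \<Rightarrow> real ^ ('c \<times> 's \<times> 'a) \<Rightarrow> real)
     \<Rightarrow> ('c \<Rightarrow> 's \<Rightarrow> ('s \<Rightarrow> 'a) \<Rightarrow> real) \<Rightarrow> bool" where
  "MSNE S A phi lam m r mu \<longleftrightarrow> mu \<in> Xset S A m \<and>
     (\<forall>c. \<forall>u\<in>Pols S A c.
        (mass_pol S mu c u > 0 \<longrightarrow> (\<forall>v\<in>Pols S A c. Fpay S A phi lam r mu c u \<ge> Fpay S A phi lam r mu c v)) \<and>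
        (\<forall>s\<in>S c. mu c s u = eta S phi lam c u s * mass_pol S mu c u))"

end

theory Submission
  imports Defs
begin

(* Summing the rest-point equation over the states removes the drift term, because every
   phi^c(. | s', a) is a probability vector; so the policy masses sigma = mu^c[S^c, .] are a rest
   point of the revision dynamics alone. For a pairwise comparison protocol a used policy of
   lowest payoff receives no inflow, hence has no outflow, so no policy beats a used one. For an
   excess payoff protocol the balance makes the switching rates proportional to sigma; positive
   correlation then forces the excess payoffs to be nonpositive and zero on used policies, and
   Lipschitz continuity excludes switching between two used policies. Either way nobody leaves a
   used policy, so the revision term vanishes state by state, and what remains says that
   mu^c[., u] is a stationary vector of phi^{c,u}. By uniqueness of the recurrent class it is
   eta^{c,u} scaled by its mass. *)

locale policy_chain =
  fixes S :: "'c \<Rightarrow> 's set" and phi :: "'c \<Rightarrow> 's \<Rightarrow> 's \<Rightarrow> 'a \<Rightarrow> real"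
    and c :: 'c and u :: "'s \<Rightarrow> 'a"
  assumes finite_states: "finite (S c)"
    and kernel_nonneg: "\<And>s t. s \<in> S c \<Longrightarrow> t \<in> S c \<Longrightarrow> phi c t s (u s) \<ge> 0"
    and kernel_sum: "\<And>s. s \<in> S c \<Longrightarrow> (\<Sum>t\<in>S c. phi c t s (u s)) = 1"
begin

definition stationary :: "('s \<Rightarrow> real) \<Rightarrow> bool" where
  "stationary w \<longleftrightarrow> (\<forall>t\<in>S c. w t = (\<Sum>s\<in>S c. phi c t s (u s) * w s))"

lemma stationary_lincomb:
  assumes "stationary x" and "stationary y"
  shows "stationary (\<lambda>s. a * x s + b * y s)"
  using assms
  by (simp add: stationary_def distrib_left sum.distrib sum_distrib_left mult.left_commute)

lemma reach_subset: "(step_rel S phi c u)\<^sup>* `` {s} \<subseteq> insert s (S c)"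
  by (auto elim: rtranclE simp: step_rel_def)

lemma stationary_pos_reach:
  assumes "stationary w" and nonneg: "\<forall>s\<in>S c. w s \<ge> 0"
    and "(s, t) \<in> (step_rel S phi c u)\<^sup>*" and "w s > 0"
  shows "w t > 0"
  using assms(3)
proof induction
  case base
  show ?case using assms(4) .
next
  case (step y z)
  then have y: "y \<in> S c" and z: "z \<in> S c" and edge: "phi c z y (u y) > 0"
    by (auto simp: step_rel_def)
  have "0 < phi c z y (u y) * w y" using edge step.IH by simp
  also have "\<dots> \<le> (\<Sum>s\<in>S c. phi c z s (u s) * w s)"
    by (rule member_le_sum) (use y z kernel_nonneg nonneg finite_states in auto)
  also have "\<dots> = w z" using assms(1) z by (simp add: stationary_def)
  finally show ?case .
qed

lemma stationary_support_has_recurrent: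
  assumes "stationary w" and nonneg: "\<forall>s\<in>S c. w s \<ge> 0" and "\<exists>s\<in>S c. w s > 0"
  shows "\<exists>s. recurrent_state S phi c u s \<and> w s > 0"
proof -
  let ?reach = "\<lambda>s. (step_rel S phi c u)\<^sup>* `` {s}"
  have finite_reach: "finite (?reach s)" for s
    using reach_subset finite_states by (meson finite_insert finite_subset)
  (* a state of the support with the fewest reachable states is recurrent *)
  obtain s0 where s0: "s0 \<in> S c" "w s0 > 0"
    and minimal: "\<And>y. y \<in> S c \<and> w y > 0 \<Longrightarrow> card (?reach s0) \<le> card (?reach y)"
    using ex_has_least_nat[of "\<lambda>s. s \<in> S c \<and> w s > 0" _ "\<lambda>s. card (?reach s)"] assms(3)
    by blast
  have "(t, s0) \<in> (step_rel S phi c u)\<^sup>*" if t: "(s0, t) \<in> (step_rel S phi c u)\<^sup>*" for t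
  proof -
    have "t \<in> S c" using reach_subset[of s0] t s0(1) by blast
    moreover have "w t > 0" using stationary_pos_reach[OF assms(1) nonneg t s0(2)] .
    ultimately have "card (?reach s0) \<le> card (?reach t)" using minimal by blast
    moreover have "?reach t \<subseteq> ?reach s0" using t by (auto intro: rtrancl_trans)
    ultimately have "?reach t = ?reach s0" using card_seteq[OF finite_reach] by blast
    then show ?thesis by blast
  qed
  then show ?thesis using s0 unfolding recurrent_state_def by blast
qed

lemma stationary_abs:
  assumes "stationary z"
  shows "stationary (\<lambda>s. \<bar>z s\<bar>)"
proof -
  (* the triangle inequality becomes an equality after summing over t, as the kernel is
     column-stochastic *)
  have le: "\<bar>z t\<bar> \<le> (\<Sum>s\<in>S c. phi c t s (u s) * \<bar>z s\<bar>)" if t: "t \<in> S c" for t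
  proof -
    have "\<bar>z t\<bar> = \<bar>\<Sum>s\<in>S c. phi c t s (u s) * z s\<bar>" using assms t by (simp add: stationary_def)
    also have "\<dots> \<le> (\<Sum>s\<in>S c. \<bar>phi c t s (u s) * z s\<bar>)" by (rule sum_abs)
    also have "\<dots> = (\<Sum>s\<in>S c. phi c t s (u s) * \<bar>z s\<bar>)"
      by (rule sum.cong) (use kernel_nonneg t in \<open>auto simp: abs_mult\<close>)
    finally show ?thesis .
  qed
  have "(\<Sum>t\<in>S c. \<bar>z t\<bar>) = (\<Sum>s\<in>S c. (\<Sum>t\<in>S c. phi c t s (u s)) * \<bar>z s\<bar>)"
    by (simp add: kernel_sum)
  also have "\<dots> = (\<Sum>t\<in>S c. \<Sum>s\<in>S c. phi c t s (u s) * \<bar>z s\<bar>)"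
    by (subst sum.swap) (simp add: sum_distrib_right)
  finally have eq: "(\<Sum>t\<in>S c. \<bar>z t\<bar>) = (\<Sum>t\<in>S c. \<Sum>s\<in>S c. phi c t s (u s) * \<bar>z s\<bar>)" .
  show ?thesis
    unfolding stationary_def
    using sum_mono_inv[where f = "\<lambda>t. \<bar>z t\<bar>", OF eq le _ finite_states] by blast
qed

lemma stationary_sign_definite:
  assumes unique: "unique_recurrent_class S phi c u" and "stationary z"
  shows "(\<forall>s\<in>S c. z s \<ge> 0) \<or> (\<forall>s\<in>S c. z s \<le> 0)"
proof (rule ccontr)
  define p where "p s = max (z s) 0" for s
  define n where "n s = max (- z s) 0" for s
  have "p = (\<lambda>s. 1/2 * \<bar>z s\<bar> + 1/2 * z s)" and "n = (\<lambda>s. 1/2 * \<bar>z s\<bar> + (- 1/2) * z s)"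
    by (auto simp: p_def n_def max_def)
  then have p: "stationary p" and n: "stationary n"
    by (simp_all only:) (intro stationary_lincomb stationary_abs assms(2))+
  have p_nonneg: "\<forall>s\<in>S c. p s \<ge> 0" and n_nonneg: "\<forall>s\<in>S c. n s \<ge> 0"
    by (simp_all add: p_def n_def)
  assume "\<not> ?thesis"
  then have "\<exists>s\<in>S c. p s > 0" and "\<exists>s\<in>S c. n s > 0"
    by (auto simp: p_def n_def max_def not_le)
  then obtain r1 r2 where r1: "recurrent_state S phi c u r1" "p r1 > 0"
    and r2: "recurrent_state S phi c u r2" "n r2 > 0"
    using stationary_support_has_recurrent[OF p p_nonneg] stationary_support_has_recurrent[OF n n_nonneg]
    by blast
  then have "(r2, r1) \<in> (step_rel S phi c u)\<^sup>*"
    using unique unfolding unique_recurrent_class_def by blast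
  then have "n r1 > 0" using stationary_pos_reach[OF n n_nonneg _ r2(2)] by blast
  with r1(2) show False by (simp add: p_def n_def max_def split: if_splits)
qed

lemma stationary_sum_zero_vanishes:
  assumes "unique_recurrent_class S phi c u" and "stationary z"
    and "(\<Sum>s\<in>S c. z s) = 0" and "s \<in> S c"
  shows "z s = 0"
  using stationary_sign_definite[OF assms(1,2)]
proof
  assume "\<forall>s\<in>S c. z s \<ge> 0"
  then show ?thesis using assms(3,4) sum_nonneg_eq_0_iff[OF finite_states] by blast
next
  assume "\<forall>s\<in>S c. z s \<le> 0"
  then have "\<forall>s\<in>S c. - z s \<ge> 0" and "(\<Sum>s\<in>S c. - z s) = 0"
    using assms(3) by (auto simp: sum_negf)
  then have "\<forall>s\<in>S c. - z s = 0" using sum_nonneg_eq_0_iff[OF finite_states, of "\<lambda>s. - z s"] by blast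
  then show ?thesis using assms(4) by simp
qed

lemma stat_dist_iff_stationary:
  assumes "lam c \<noteq> 0"
  shows "stat_dist S phi lam c u \<eta> \<longleftrightarrow>
    (\<forall>s. s \<notin> S c \<longrightarrow> \<eta> s = 0) \<and> (\<forall>s\<in>S c. \<eta> s \<ge> 0) \<and> sum \<eta> (S c) = 1 \<and> stationary \<eta>"
  using assms by (auto simp: stat_dist_def stationary_def)

lemma stat_dist_unique:
  assumes unique: "unique_recurrent_class S phi c u" and lam: "lam c \<noteq> 0"
    and x: "stat_dist S phi lam c u x" and y: "stat_dist S phi lam c u y"
  shows "x = y"
proof
  fix s
  have "stationary (\<lambda>s. 1 * x s + (- 1) * y s)"
    using x y by (intro stationary_lincomb) (simp_all add: stat_dist_iff_stationary[where lam = lam, OF lam])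
  moreover have "(\<Sum>s\<in>S c. 1 * x s + (- 1) * y s) = 0"
    using x y by (simp add: stat_dist_def sum_subtractf)
  ultimately have "s \<in> S c \<Longrightarrow> x s - y s = 0"
    using stationary_sum_zero_vanishes[OF unique] by fastforce
  then show "x s = y s" using x y by (cases "s \<in> S c") (auto simp: stat_dist_def)
qed

lemma eta_eqI:
  assumes unique: "unique_recurrent_class S phi c u" and lam: "lam c \<noteq> 0"
    and \<eta>: "stat_dist S phi lam c u \<eta>"
  shows "eta S phi lam c u = \<eta>"
  unfolding eta_def
proof (rule the_equality)
  show "stat_dist S phi lam c u \<eta>" by (fact \<eta>)
  show "x = \<eta>" if "stat_dist S phi lam c u x" for x
    by (rule stat_dist_unique[where lam = lam, OF unique lam that \<eta>])
qed

lemma stationary_eq_eta_scaled: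
  assumes unique: "unique_recurrent_class S phi c u" and lam: "lam c \<noteq> 0"
    and w: "stationary w" and nonneg: "\<forall>s\<in>S c. w s \<ge> 0" and s: "s \<in> S c"
  shows "w s = eta S phi lam c u s * sum w (S c)"
proof (cases "sum w (S c) = 0")
  case True
  then have "\<forall>s\<in>S c. w s = 0" using nonneg sum_nonneg_eq_0_iff[OF finite_states, of w] by blast
  then show ?thesis using s by simp
next
  case False
  define \<eta> where "\<eta> s = (if s \<in> S c then w s / sum w (S c) else 0)" for s
  have "stationary \<eta>"
    unfolding stationary_def
  proof
    fix t assume t: "t \<in> S c"
    then have "w t = (\<Sum>s\<in>S c. phi c t s (u s) * w s)" using w unfolding stationary_def by blast
    then show "\<eta> t = (\<Sum>s\<in>S c. phi c t s (u s) * \<eta> s)"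
      using t by (simp add: \<eta>_def sum_divide_distrib)
  qed
  moreover have "sum \<eta> (S c) = 1"
    using False by (simp add: \<eta>_def sum_divide_distrib[symmetric])
  ultimately have "stat_dist S phi lam c u \<eta>"
    unfolding stat_dist_iff_stationary[where lam = lam, OF lam]
    using nonneg by (simp add: \<eta>_def sum_nonneg)
  then have "eta S phi lam c u = \<eta>"
    by (rule eta_eqI[where lam = lam, OF unique lam])
  moreover have "w s = \<eta> s * sum w (S c)"
    using False s by (simp add: \<eta>_def)
  ultimately show ?thesis by simp
qed

end

definition flow_balanced :: "'u set \<Rightarrow> ('u \<Rightarrow> real) \<Rightarrow> ('u \<Rightarrow> 'u \<Rightarrow> real) \<Rightarrow> bool" where
  "flow_balanced U \<sigma> \<rho> \<longleftrightarrow> (\<forall>v\<in>U. (\<Sum>u\<in>U. \<sigma> u * \<rho> u v) = \<sigma> v * (\<Sum>w\<in>U. \<rho> v w))"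

lemma revision_flow_vanishes_without_switching:
  fixes x :: "'u \<Rightarrow> real" and \<rho> :: "'u \<Rightarrow> 'u \<Rightarrow> real"
  assumes "finite U" and u: "u \<in> U"
    and no_switch: "\<And>u' v. u' \<in> U \<Longrightarrow> v \<in> U \<Longrightarrow> x u' \<noteq> 0 \<Longrightarrow> v \<noteq> u' \<Longrightarrow> \<rho> u' v = 0"
  shows "(\<Sum>u'\<in>U. x u' * \<rho> u' u) - x u * (\<Sum>v\<in>U. \<rho> u v) = 0"
proof -
  have "(\<Sum>u'\<in>U - {u}. x u' * \<rho> u' u) = 0"
    using no_switch[of _ u] u by (intro sum.neutral) fastforce
  then have "(\<Sum>u'\<in>U. x u' * \<rho> u' u) = x u * \<rho> u u"
    by (simp add: sum.remove[OF assms(1) u])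
  moreover have "x u * (\<Sum>v\<in>U. \<rho> u v) = x u * \<rho> u u"
  proof (cases "x u = 0")
    case False
    then have "(\<Sum>v\<in>U - {u}. \<rho> u v) = 0"
      using no_switch[of u] u by (intro sum.neutral) auto
    then show ?thesis by (simp add: sum.remove[OF assms(1) u])
  qed simp
  ultimately show ?thesis by linarith
qed

lemma pairwise_comparison_best_response:
  fixes \<sigma> F :: "'u \<Rightarrow> real" and \<rho> :: "'u \<Rightarrow> 'u \<Rightarrow> real"
  assumes "finite U" and \<sigma>_nonneg: "\<forall>u\<in>U. \<sigma> u \<ge> 0"
    and sign: "\<And>u v. u \<in> U \<Longrightarrow> v \<in> U \<Longrightarrow> sgn (\<rho> u v) = sgn (max 0 (F v - F u))"
    and balanced: "flow_balanced U \<sigma> \<rho>"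
    and u: "u \<in> U" "\<sigma> u > 0" and v: "v \<in> U"
  shows "F v \<le> F u"
proof (rule ccontr)
  (* a used policy u0 of least payoff gets no inflow, but would flow out towards v *)
  assume "\<not> F v \<le> F u"
  have rate_zero: "\<rho> x y = 0" if "x \<in> U" "y \<in> U" "F y \<le> F x" for x y
    using sign[OF that(1,2)] that(3) by (simp add: max_absorb1 sgn_eq_0_iff)
  have rate_pos: "\<rho> x y > 0" if "x \<in> U" "y \<in> U" "F x < F y" for x y
    using sign[OF that(1,2)] that(3) by (simp add: max_absorb2 sgn_1_pos)
  have rate_nonneg: "\<rho> x y \<ge> 0" if "x \<in> U" "y \<in> U" for x y
    using rate_zero rate_pos that by (metis less_le not_le)
  obtain u0 where u0: "u0 \<in> U" "\<sigma> u0 > 0"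
    and u0_min: "\<And>x. x \<in> U \<Longrightarrow> \<sigma> x > 0 \<Longrightarrow> F u0 \<le> F x"
    using ex_is_arg_min_if_finite[of "{x\<in>U. \<sigma> x > 0}" F] assms(1) u
    by (auto simp: is_arg_min_linorder)
  have "(\<Sum>x\<in>U. \<sigma> x * \<rho> x u0) = 0"
  proof (rule sum.neutral, rule ballI)
    fix x assume x: "x \<in> U"
    show "\<sigma> x * \<rho> x u0 = 0"
      using \<sigma>_nonneg x rate_zero[OF x u0(1) u0_min[OF x]] by (cases "\<sigma> x > 0") auto
  qed
  moreover have "0 < \<sigma> u0 * \<rho> u0 v"
    using u0 u0_min[OF u] \<open>\<not> F v \<le> F u\<close> rate_pos[OF u0(1) v] by simp
  also have "\<dots> \<le> \<sigma> u0 * (\<Sum>w\<in>U. \<rho> u0 w)"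
    using u0 v rate_nonneg assms(1) by (intro mult_left_mono member_le_sum) auto
  ultimately show False
    using balanced u0(1) unfolding flow_balanced_def by auto
qed

lemma pairwise_comparison_rest_point:
  fixes \<sigma> F :: "'u \<Rightarrow> real" and \<rho> :: "'u \<Rightarrow> 'u \<Rightarrow> real"
  assumes "finite U" and "\<forall>u\<in>U. \<sigma> u \<ge> 0"
    and sign: "\<And>u v. u \<in> U \<Longrightarrow> v \<in> U \<Longrightarrow> sgn (\<rho> u v) = sgn (max 0 (F v - F u))"
    and "flow_balanced U \<sigma> \<rho>" and "u \<in> U" "\<sigma> u > 0"
  shows "(\<forall>v\<in>U. F v \<le> F u) \<and> (\<forall>v\<in>U. \<rho> u v = 0)"
proof -
  have "F v \<le> F u" if "v \<in> U" for v
    using pairwise_comparison_best_response[OF assms(1,2) sign assms(4-6) that] .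
  moreover have "\<rho> u v = 0" if "v \<in> U" for v
    using sign[OF \<open>u \<in> U\<close> that] calculation[OF that] by (simp add: max_absorb1 sgn_eq_0_iff)
  ultimately show ?thesis by blast
qed

lemma sum_remove_two:
  assumes "finite U" "w \<in> U" "v \<in> U" "w \<noteq> v"
  shows "sum f U = f w + f v + sum f (U - {w, v})"
proof -
  have "sum f U = f w + sum f (U - {w})" by (rule sum.remove[OF assms(1,2)])
  also have "sum f (U - {w}) = f v + sum f (U - {w} - {v})"
    using assms by (intro sum.remove) auto
  also have "U - {w} - {v} = U - {w, v}" by auto
  finally show ?thesis by (simp add: add.assoc)
qed

lemma sum_dist_two_point_update:
  fixes G :: "'u \<Rightarrow> real"
  assumes "finite U" "w \<in> U" "v \<in> U" "w \<noteq> v" "G w = 0" "G v = 0" "e \<ge> 0" "K \<ge> 0"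
  shows "(\<Sum>x\<in>U. \<bar>(G(w := e, v := - K * e)) x - G x\<bar>) = (1 + K) * e"
  using sum_remove_two[OF assms(1-4), of "\<lambda>x. \<bar>(G(w := e, v := - K * e)) x - G x\<bar>"] assms(4-8)
  by (simp add: algebra_simps)

lemma ex_pos_mult_le:
  fixes L C d :: real
  assumes "C > 0" and "d > 0"
  obtains e where "e > 0" and "L * (C * e) \<le> d"
proof
  let ?e = "d / ((1 + \<bar>L\<bar>) * C)"
  show "?e > 0" using assms by simp
  have "L * (C * ?e) \<le> (1 + \<bar>L\<bar>) * (C * ?e)"
    using assms by (intro mult_right_mono) auto
  also have "\<dots> = d" using assms by simp
  finally show "L * (C * ?e) \<le> d" .
qed

(* Raise the tie G w = 0 to e and lower G v to -K e: for small e Lipschitz continuity keeps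
   tau G' w below tau G w + 1 and tau G' v above tau G v / 2, so for large K the inner product
   of tau G' with G' is nonpositive although G' w > 0. *)
lemma positive_correlation_tie_rate_zero:
  fixes \<tau> :: "('u \<Rightarrow> real) \<Rightarrow> 'u \<Rightarrow> real" and G :: "'u \<Rightarrow> real"
  assumes "finite U"
    and lip: "\<forall>G G'. \<forall>v\<in>U. \<bar>\<tau> G v - \<tau> G' v\<bar> \<le> L * (\<Sum>w\<in>U. \<bar>G w - G' w\<bar>)"
    and nonneg: "\<forall>G. \<forall>v\<in>U. \<tau> G v \<ge> 0"
    and pc: "\<forall>G. (\<exists>v\<in>U. G v > 0) \<longrightarrow> (\<Sum>v\<in>U. \<tau> G v * G v) > 0"
    and G_nonpos: "\<forall>x\<in>U. G x \<le> 0"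
    and w: "w \<in> U" "G w = 0" and v: "v \<in> U" "G v = 0" and "w \<noteq> v"
  shows "\<tau> G v = 0"
proof (rule ccontr)
  define a where "a = \<tau> G w"
  define b where "b = \<tau> G v"
  assume "\<tau> G v \<noteq> 0"
  then have a: "a \<ge> 0" and b: "b > 0"
    using nonneg w v by (auto simp: a_def b_def order_less_le)
  define K where "K = 2 * (a + 1) / b"
  have K: "K > 0" using a b by (simp add: K_def)
  obtain e where e: "e > 0" and Le: "L * ((1 + K) * e) \<le> min 1 (b / 2)"
    using ex_pos_mult_le[of "1 + K" "min 1 (b / 2)"] K b by auto
  define G' where "G' = G(w := e, v := - K * e)"
  have G': "G' w = e" "G' v = - K * e" "\<And>x. x \<in> U - {w, v} \<Longrightarrow> G' x = G x"
    using \<open>w \<noteq> v\<close> by (auto simp: G'_def)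
  have "(\<Sum>x\<in>U. \<bar>G' x - G x\<bar>) = (1 + K) * e"
    unfolding G'_def using assms(1) w v \<open>w \<noteq> v\<close> K e by (intro sum_dist_two_point_update) auto
  then have "\<bar>\<tau> G' x - \<tau> G x\<bar> \<le> min 1 (b / 2)" if "x \<in> U" for x
    using lip that Le by (metis order_trans)
  then have "\<bar>\<tau> G' w - a\<bar> \<le> 1" and "\<bar>\<tau> G' v - b\<bar> \<le> b / 2"
    using w(1) v(1) unfolding a_def b_def by simp_all
  then have "\<tau> G' w \<le> a + 1" and "b / 2 \<le> \<tau> G' v"
    using abs_le_D1 abs_le_D2 by fastforce+
  then have "\<tau> G' w * e \<le> (a + 1) * e" and "b / 2 * (K * e) \<le> \<tau> G' v * (K * e)"
    using K e by (simp_all add: mult_right_mono)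
  moreover have "b / 2 * (K * e) = (a + 1) * e" using b by (simp add: K_def)
  moreover have "(\<Sum>x\<in>U - {w, v}. \<tau> G' x * G' x) \<le> 0"
    using G' nonneg G_nonpos by (intro sum_nonpos) (simp add: mult_nonneg_nonpos)
  moreover have "(\<Sum>x\<in>U. \<tau> G' x * G' x)
      = \<tau> G' w * e - \<tau> G' v * (K * e) + (\<Sum>x\<in>U - {w, v}. \<tau> G' x * G' x)"
    using sum_remove_two[OF assms(1) w(1) v(1) \<open>w \<noteq> v\<close>, of "\<lambda>x. \<tau> G' x * G' x"] G'(1,2)
    by simp
  ultimately have "(\<Sum>x\<in>U. \<tau> G' x * G' x) \<le> 0" by linarith
  moreover have "(\<Sum>x\<in>U. \<tau> G' x * G' x) > 0"
    using pc w(1) G'(1) e by auto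
  ultimately show False by simp
qed

lemma positive_correlation_mean_zero_nonpos:
  fixes \<sigma> G :: "'u \<Rightarrow> real" and \<tau> :: "('u \<Rightarrow> real) \<Rightarrow> 'u \<Rightarrow> real"
  assumes "finite U" and \<sigma>_nonneg: "\<forall>v\<in>U. \<sigma> v \<ge> 0"
    and pc: "\<forall>G. (\<exists>v\<in>U. G v > 0) \<longrightarrow> (\<Sum>v\<in>U. \<tau> G v * G v) > 0"
    and proportional: "\<forall>v\<in>U. \<tau> G v = k * \<sigma> v"
    and mean_zero: "(\<Sum>v\<in>U. \<sigma> v * G v) = 0"
  shows "\<forall>v\<in>U. G v \<le> 0" and "\<And>v. v \<in> U \<Longrightarrow> \<sigma> v > 0 \<Longrightarrow> G v = 0"
proof -
  show G_nonpos: "\<forall>v\<in>U. G v \<le> 0"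
  proof (rule ccontr)
    assume "\<not> ?thesis"
    then have "(\<Sum>v\<in>U. \<tau> G v * G v) > 0" using pc by (auto simp: not_le)
    moreover have "(\<Sum>v\<in>U. \<tau> G v * G v) = k * (\<Sum>v\<in>U. \<sigma> v * G v)"
      by (simp add: sum_distrib_left proportional mult_ac)
    ultimately show False using mean_zero by simp
  qed
  fix v assume v: "v \<in> U" "\<sigma> v > 0"
  have "\<forall>y\<in>U. - (\<sigma> y * G y) \<ge> 0"
    using \<sigma>_nonneg G_nonpos by (simp add: mult_nonneg_nonpos)
  moreover have "(\<Sum>y\<in>U. - (\<sigma> y * G y)) = 0" using mean_zero by (simp add: sum_negf)
  ultimately have "- (\<sigma> v * G v) = 0"
    using sum_nonneg_eq_0_iff[OF assms(1), of "\<lambda>y. - (\<sigma> y * G y)"] v(1) by blast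
  then show "G v = 0" using v(2) by simp
qed

lemma excess_payoff_rest_point:
  fixes \<sigma> F :: "'u \<Rightarrow> real" and \<tau> :: "('u \<Rightarrow> real) \<Rightarrow> 'u \<Rightarrow> real" and \<rho> :: "'u \<Rightarrow> 'u \<Rightarrow> real"
  assumes "finite U" and \<sigma>_nonneg: "\<forall>u\<in>U. \<sigma> u \<ge> 0" and \<sigma>_sum: "sum \<sigma> U = m" and "m > 0"
    and rate: "\<And>u v. u \<in> U \<Longrightarrow> v \<in> U \<Longrightarrow> \<rho> u v = \<tau> (\<lambda>w. F w - (\<Sum>w'\<in>U. F w' * \<sigma> w') / m) v"
    and lip: "\<forall>G G'. \<forall>v\<in>U. \<bar>\<tau> G v - \<tau> G' v\<bar> \<le> L * (\<Sum>w\<in>U. \<bar>G w - G' w\<bar>)"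
    and nonneg: "\<forall>G. \<forall>v\<in>U. \<tau> G v \<ge> 0"
    and pc: "\<forall>G. (\<exists>v\<in>U. G v > 0) \<longrightarrow> (\<Sum>v\<in>U. \<tau> G v * G v) > 0"
    and balanced: "flow_balanced U \<sigma> \<rho>" and u: "u \<in> U" "\<sigma> u > 0"
  shows "(\<forall>v\<in>U. F v \<le> F u) \<and> (\<forall>v\<in>U. v \<noteq> u \<longrightarrow> \<rho> u v = 0)"
proof -
  define G where "G = (\<lambda>w. F w - (\<Sum>w'\<in>U. F w' * \<sigma> w') / m)"
  define T where "T = (\<Sum>w\<in>U. \<tau> G w)"
  have \<rho>_eq: "\<rho> x y = \<tau> G y" if "x \<in> U" "y \<in> U" for x y
    using rate[OF that] by (simp add: G_def)
  (* all policies switch to v at the same rate, so balance makes the rates proportional to sigma *)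
  have proportional: "\<forall>v\<in>U. \<tau> G v = T / m * \<sigma> v"
  proof
    fix v assume v: "v \<in> U"
    have "m * \<tau> G v = (\<Sum>x\<in>U. \<sigma> x * \<rho> x v)"
      using v \<sigma>_sum by (simp add: \<rho>_eq sum_distrib_right[symmetric])
    also have "\<dots> = \<sigma> v * T"
      using balanced v by (simp add: flow_balanced_def \<rho>_eq T_def)
    finally show "\<tau> G v = T / m * \<sigma> v" using \<open>m > 0\<close> by (simp add: field_simps)
  qed
  have "(\<Sum>v\<in>U. \<sigma> v * G v)
      = (\<Sum>v\<in>U. F v * \<sigma> v) - (\<Sum>v\<in>U. \<sigma> v) * ((\<Sum>w'\<in>U. F w' * \<sigma> w') / m)"
    by (simp add: G_def algebra_simps sum_subtractf sum_distrib_right sum_divide_distrib)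
  then have mean_zero: "(\<Sum>v\<in>U. \<sigma> v * G v) = 0"
    using \<open>m > 0\<close> \<sigma>_sum by simp
  note G_nonpos = positive_correlation_mean_zero_nonpos(1)[OF assms(1) \<sigma>_nonneg pc proportional mean_zero]
  note G_zero = positive_correlation_mean_zero_nonpos(2)[OF assms(1) \<sigma>_nonneg pc proportional mean_zero]
  have "F v \<le> F u" if "v \<in> U" for v
    using G_nonpos that G_zero[OF u] by (simp add: G_def)
  moreover have "\<rho> u v = 0" if v: "v \<in> U" "v \<noteq> u" for v
  proof (cases "\<sigma> v > 0")
    case True
    have "\<tau> G v = 0"
      by (rule positive_correlation_tie_rate_zero[OF assms(1) lip nonneg pc G_nonpos u(1) _ v(1)])
         (use G_zero u v True in auto)
    then show ?thesis using \<rho>_eq u v by simp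
  next
    case False
    then show ?thesis using \<sigma>_nonneg v \<rho>_eq[OF u(1) v(1)] proportional v(1) by force
  qed
  ultimately show ?thesis by blast
qed

lemma Pols_mem: "u \<in> Pols S A c \<Longrightarrow> s \<in> S c \<Longrightarrow> u s \<in> A c s"
  by (simp add: Pols_def PiE_mem)

lemma policy_chain_Pols:
  assumes "finite (S c)"
    and "\<forall>s'\<in>S c. \<forall>a\<in>A c s'. \<forall>s\<in>S c. phi c s s' a \<ge> 0"
    and "\<forall>s'\<in>S c. \<forall>a\<in>A c s'. (\<Sum>s\<in>S c. phi c s s' a) = 1"
    and "u \<in> Pols S A c"
  shows "policy_chain S phi c u"
  using assms by unfold_locales (auto simp: Pols_mem)

lemma mass_pol_in_XU:
  assumes "mu \<in> Xset S A m"
  shows "mass_pol S mu c \<in> XU S A m c"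
proof -
  have "sum (mass_pol S mu c) (Pols S A c) = (\<Sum>s\<in>S c. \<Sum>u\<in>Pols S A c. mu c s u)"
    unfolding mass_pol_def by (rule sum.swap)
  then show ?thesis
    using assms by (auto simp: Xset_def XU_def mass_pol_def intro: sum_nonneg)
qed

lemma fd_Pols:
  fixes A :: "'c \<Rightarrow> 's \<Rightarrow> 'a::finite set"
  assumes u: "u \<in> Pols S A c"
  shows "fd S A phi lam mu c s u = lam c * ((\<Sum>s'\<in>S c. phi c s s' (u s') * mu c s' u) - mu c s u)"
proof -
  have "(\<Sum>a\<in>A c s'. phi c s s' a * pol u s' a * mu c s' u) = phi c s s' (u s') * mu c s' u"
    if "s' \<in> S c" for s'
  proof -
    have "(\<Sum>a\<in>A c s'. phi c s s' a * pol u s' a * mu c s' u)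
        = (\<Sum>a\<in>A c s'. if a = u s' then phi c s s' a * mu c s' u else 0)"
      by (rule sum.cong) (simp_all add: pol_def)
    then show ?thesis using Pols_mem[OF u that] by simp
  qed
  then show ?thesis by (simp add: fd_def right_diff_distrib)
qed

lemma sum_fd_eq_0:
  fixes A :: "'c \<Rightarrow> 's \<Rightarrow> 'a::finite set"
  assumes phi_sum: "\<forall>s'\<in>S c. \<forall>a\<in>A c s'. (\<Sum>s\<in>S c. phi c s s' a) = 1"
    and u: "u \<in> Pols S A c"
  shows "(\<Sum>s\<in>S c. fd S A phi lam mu c s u) = 0"
proof -
  have "(\<Sum>s\<in>S c. \<Sum>s'\<in>S c. phi c s s' (u s') * mu c s' u)
      = (\<Sum>s'\<in>S c. (\<Sum>s\<in>S c. phi c s s' (u s')) * mu c s' u)"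
    by (subst sum.swap) (simp add: sum_distrib_right)
  also have "\<dots> = (\<Sum>s'\<in>S c. mu c s' u)"
    using phi_sum Pols_mem[OF u] by simp
  finally show ?thesis
    by (simp add: fd_Pols[OF u] sum_subtractf sum_distrib_left[symmetric])
qed

lemma sum_fr_eq:
  "(\<Sum>s\<in>S c. fr S A phi lam r rho mu c s v)
    = (\<Sum>u\<in>Pols S A c. mass_pol S mu c u * rho c (Fpay S A phi lam r mu c) (mass_pol S mu c) u v)
      - mass_pol S mu c v * (\<Sum>w\<in>Pols S A c. rho c (Fpay S A phi lam r mu c) (mass_pol S mu c) v w)"
  by (simp add: fr_def mass_pol_def sum_subtractf sum_distrib_right sum.swap[of _ "S c"])

lemma rest_point_flow_balanced:
  fixes S :: "'c::finite \<Rightarrow> 's::finite set" and A :: "'c \<Rightarrow> 's \<Rightarrow> 'a::finite set"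
  assumes phi_sum: "\<forall>s'\<in>S c. \<forall>a\<in>A c s'. (\<Sum>s\<in>S c. phi c s s' a) = 1"
    and rest: "\<forall>s\<in>S c. \<forall>u\<in>Pols S A c. fd S A phi lam mu c s u + fr S A phi lam r rho mu c s u = 0"
  shows "flow_balanced (Pols S A c) (mass_pol S mu c) (rho c (Fpay S A phi lam r mu c) (mass_pol S mu c))"
  unfolding flow_balanced_def
proof
  fix v assume v: "v \<in> Pols S A c"
  have "(\<Sum>s\<in>S c. fd S A phi lam mu c s v + fr S A phi lam r rho mu c s v) = 0"
    using rest v by simp
  moreover have "(\<Sum>s\<in>S c. fd S A phi lam mu c s v) = 0"
    using phi_sum v by (rule sum_fd_eq_0)
  ultimately have "(\<Sum>s\<in>S c. fr S A phi lam r rho mu c s v) = 0"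
    by (simp add: sum.distrib)
  then show "(\<Sum>u\<in>Pols S A c. mass_pol S mu c u * rho c (Fpay S A phi lam r mu c) (mass_pol S mu c) u v)
      = mass_pol S mu c v * (\<Sum>w\<in>Pols S A c. rho c (Fpay S A phi lam r mu c) (mass_pol S mu c) v w)"
    by (simp add: sum_fr_eq)
qed

lemma mass_pol_pos:
  fixes S :: "'c::finite \<Rightarrow> 's::finite set"
  assumes "mu \<in> Xset S A m" "s \<in> S c" "w \<in> Pols S A c" "mu c s w \<noteq> 0"
  shows "mass_pol S mu c w > 0"
proof -
  have nonneg: "\<forall>s\<in>S c. mu c s w \<ge> 0" using assms(1,3) by (simp add: Xset_def)
  then have "0 < mu c s w" using assms(2,4) by force
  also have "\<dots> \<le> mass_pol S mu c w"
    unfolding mass_pol_def using nonneg assms(2) by (intro member_le_sum) auto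
  finally show ?thesis .
qed

lemma protocol_rest_point:
  fixes S :: "'c \<Rightarrow> 's::finite set" and A :: "'c \<Rightarrow> 's \<Rightarrow> 'a::finite set"
  assumes protocol: "excess_payoff_protocol S A m rho c \<or> pairwise_comparison_protocol S A m rho c"
    and "m c > 0" and \<sigma>: "\<sigma> \<in> XU S A m c" and balanced: "flow_balanced (Pols S A c) \<sigma> (rho c F \<sigma>)"
    and u: "u \<in> Pols S A c" "\<sigma> u > 0"
  shows "(\<forall>v\<in>Pols S A c. F v \<le> F u) \<and> (\<forall>v\<in>Pols S A c. v \<noteq> u \<longrightarrow> rho c F \<sigma> u v = 0)"
  using protocol
proof
  assume "excess_payoff_protocol S A m rho c"
  then obtain \<tau> L where
    rate: "\<forall>F \<sigma>. \<sigma> \<in> XU S A m c \<longrightarrow> (\<forall>u\<in>Pols S A c. \<forall>v\<in>Pols S A c.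
        rho c F \<sigma> u v = \<tau> (\<lambda>w. F w - (\<Sum>w'\<in>Pols S A c. F w' * \<sigma> w') / m c) v)"
    and lip: "\<forall>G G'. \<forall>v\<in>Pols S A c. \<bar>\<tau> G v - \<tau> G' v\<bar> \<le> L * (\<Sum>w\<in>Pols S A c. \<bar>G w - G' w\<bar>)"
    and nonneg: "\<forall>G. \<forall>v\<in>Pols S A c. \<tau> G v \<ge> 0"
    and pc: "\<forall>G. (\<exists>v\<in>Pols S A c. G v > 0) \<longrightarrow> (\<Sum>v\<in>Pols S A c. \<tau> G v * G v) > 0"
    unfolding excess_payoff_protocol_def by blast
  show ?thesis
    by (rule excess_payoff_rest_point[where \<rho> = "rho c F \<sigma>" and \<tau> = \<tau> and L = L])
       (use \<sigma> rate lip nonneg pc balanced u \<open>m c > 0\<close> in \<open>auto simp: XU_def\<close>)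
next
  assume "pairwise_comparison_protocol S A m rho c"
  then obtain \<tau> where
    rate: "\<forall>F \<sigma>. \<sigma> \<in> XU S A m c \<longrightarrow> (\<forall>u\<in>Pols S A c. \<forall>v\<in>Pols S A c. rho c F \<sigma> u v = \<tau> F u v)"
    and sign: "\<forall>G. \<forall>u\<in>Pols S A c. \<forall>v\<in>Pols S A c. \<tau> G u v \<ge> 0 \<and> sgn (\<tau> G u v) = sgn (max 0 (G v - G u))"
    unfolding pairwise_comparison_protocol_def by blast
  have "(\<forall>v\<in>Pols S A c. F v \<le> F u) \<and> (\<forall>v\<in>Pols S A c. rho c F \<sigma> u v = 0)"
    by (rule pairwise_comparison_rest_point[where \<rho> = "rho c F \<sigma>"])
       (use \<sigma> rate sign balanced u in \<open>auto simp: XU_def\<close>)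
  then show ?thesis by blast
qed

lemma rest_point_class_conditions:
  fixes S :: "'c::finite \<Rightarrow> 's::finite set" and A :: "'c \<Rightarrow> 's \<Rightarrow> 'a::finite set"
  assumes "m c > 0" and "lam c > 0"
    and phi_nonneg: "\<forall>s'\<in>S c. \<forall>a\<in>A c s'. \<forall>s\<in>S c. phi c s s' a \<ge> 0"
    and phi_sum: "\<forall>s'\<in>S c. \<forall>a\<in>A c s'. (\<Sum>s\<in>S c. phi c s s' a) = 1"
    and unique: "unique_recurrent_class S phi c u"
    and protocol: "excess_payoff_protocol S A m rho c \<or> pairwise_comparison_protocol S A m rho c"
    and mu_X: "mu \<in> Xset S A m"
    and rest: "\<forall>s\<in>S c. \<forall>u\<in>Pols S A c. fd S A phi lam mu c s u + fr S A phi lam r rho mu c s u = 0"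
    and u: "u \<in> Pols S A c"
  shows "(mass_pol S mu c u > 0 \<longrightarrow> (\<forall>v\<in>Pols S A c. Fpay S A phi lam r mu c u \<ge> Fpay S A phi lam r mu c v))
    \<and> (\<forall>s\<in>S c. mu c s u = eta S phi lam c u s * mass_pol S mu c u)"
proof -
  let ?\<sigma> = "mass_pol S mu c" and ?F = "Fpay S A phi lam r mu c"
  interpret policy_chain S phi c u
    using phi_nonneg phi_sum u by (intro policy_chain_Pols) simp_all
  have mu_nonneg: "\<forall>s\<in>S c. \<forall>v\<in>Pols S A c. mu c s v \<ge> 0"
    using mu_X by (simp add: Xset_def)
  have balanced: "flow_balanced (Pols S A c) ?\<sigma> (rho c ?F ?\<sigma>)"
    using phi_sum rest by (rule rest_point_flow_balanced)
  have used: "(\<forall>v\<in>Pols S A c. ?F v \<le> ?F w) \<and> (\<forall>v\<in>Pols S A c. v \<noteq> w \<longrightarrow> rho c ?F ?\<sigma> w v = 0)"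
    if "w \<in> Pols S A c" "?\<sigma> w > 0" for w
    using protocol \<open>m c > 0\<close> mass_pol_in_XU[OF mu_X] balanced that by (rule protocol_rest_point)
  have fr_zero: "fr S A phi lam r rho mu c s u = 0" if "s \<in> S c" for s
    unfolding fr_def using used mass_pol_pos[OF mu_X that]
    by (intro revision_flow_vanishes_without_switching[OF _ u]) auto
  have "stationary (\<lambda>s. mu c s u)"
    unfolding stationary_def
  proof
    fix t assume t: "t \<in> S c"
    have "fd S A phi lam mu c t u = 0" using bspec[OF bspec[OF rest t] u] fr_zero[OF t] by simp
    then have "lam c * ((\<Sum>s\<in>S c. phi c t s (u s) * mu c s u) - mu c t u) = 0"
      by (simp only: fd_Pols[OF u])
    then show "mu c t u = (\<Sum>s\<in>S c. phi c t s (u s) * mu c s u)" using \<open>lam c > 0\<close> by simp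
  qed
  then have "\<forall>s\<in>S c. mu c s u = eta S phi lam c u s * ?\<sigma> u"
    using stationary_eq_eta_scaled[where lam = lam, OF unique] \<open>lam c > 0\<close> mu_nonneg u
    by (simp add: mass_pol_def)
  then show ?thesis using used[OF u] by simp
qed

theorem theorem5:
  fixes S :: "'c::finite \<Rightarrow> 's::finite set"
    and A :: "'c \<Rightarrow> 's \<Rightarrow> 'a::finite set"
    and phi :: "'c \<Rightarrow> 's \<Rightarrow> 's \<Rightarrow> 'a \<Rightarrow> real"
    and lam m R :: "'c \<Rightarrow> real"
    and r :: "'c \<Rightarrow> 's \<Rightarrow> 'a \<Rightarrow> real ^ ('c \<times> 's \<times> 'a) \<Rightarrow> real"
    and rho :: "'c \<Rightarrow> (('s \<Rightarrow> 'a) \<Rightarrow> real) \<Rightarrow> (('s \<Rightarrow> 'a) \<Rightarrow> real) \<Rightarrow> ('s \<Rightarrow> 'a) \<Rightarrow> ('s \<Rightarrow> 'a) \<Rightarrow> real"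
    and mu :: "'c \<Rightarrow> 's \<Rightarrow> ('s \<Rightarrow> 'a) \<Rightarrow> real"
  assumes m_pos: "\<forall>c. m c > 0"
    and lam_pos: "\<forall>c. lam c > 0"
    and S_ne: "\<forall>c. S c \<noteq> {}"
    and A_ne: "\<forall>c. \<forall>s\<in>S c. A c s \<noteq> {}"
    and phi_nonneg: "\<forall>c. \<forall>s'\<in>S c. \<forall>a\<in>A c s'. \<forall>s\<in>S c. phi c s s' a \<ge> 0"
    and phi_sum: "\<forall>c. \<forall>s'\<in>S c. \<forall>a\<in>A c s'. (\<Sum>s\<in>S c. phi c s s' a) = 1"
    and A1: "A1 S A m r"
    and A2: "A2 S A phi"
    and A3: "A3 S A phi lam m r rho R"
    and R_pos: "\<forall>c. R c > 0"
    and rho_nonneg: "\<forall>c. rho_nonneg S A m rho c"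
    and protocol: "\<forall>c. excess_payoff_protocol S A m rho c \<or> pairwise_comparison_protocol S A m rho c"
    and mu_X: "mu \<in> Xset S A m"
    and rest: "\<forall>c. \<forall>s\<in>S c. \<forall>u\<in>Pols S A c.
                 fd S A phi lam mu c s u + fr S A phi lam r rho mu c s u = 0"
  shows "MSNE S A phi lam m r mu"
proof -
  have "(mass_pol S mu c u > 0 \<longrightarrow> (\<forall>v\<in>Pols S A c. Fpay S A phi lam r mu c u \<ge> Fpay S A phi lam r mu c v))
      \<and> (\<forall>s\<in>S c. mu c s u = eta S phi lam c u s * mass_pol S mu c u)"
    if u: "u \<in> Pols S A c" for c u
  proof (rule rest_point_class_conditions[where rho = rho])
    show "unique_recurrent_class S phi c u" using A2 u by (simp add: A2_def)
  qed (use m_pos lam_pos phi_nonneg phi_sum protocol mu_X rest u in simp_all)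
  then show ?thesis using mu_X unfolding MSNE_def by blast
qed

end
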